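(* Let $k\ge3$ and let $\{H_{r_1},\dots,H_{r_k}\}$ be a set of pairwise ultra-parallel hyperplanes in $\mathbb{H}^n$ having a common perpendicular $\varrho$ (a geodesic line meeting each $H_{r_i}$ orthogonally). If the group $D\subseteq\mathrm{Iso}(\mathbb{H}^n)$ generated by the reflections $r_i$ across $H_{r_i}$ is a discrete subgroup, then $D$ is isomorphic to the infinite dihedral group $D_\infty$.
   Context: Two disjoint hyperplanes in $\mathbb{H}^n$ are ultra-parallel if they have no common point in the visual boundary $\partial\mathbb{H}^n$. *)

theory Defs
  imports "HOL-Analysis.Analysis" "HOL-Algebra.Algebra"
begin

text \<open>Hyperboloid model of hyperbolic n-space, n = CARD('n), inside
  Minkowski space R^(n+1) = (real^'n) \<times> real (last coordinate = time).\<close>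

type_synonym 'n mpt = "(real^'n) \<times> real"

definition minner :: "('n::finite) mpt \<Rightarrow> 'n mpt \<Rightarrow> real" where
  "minner x y = fst x \<bullet> fst y - snd x * snd y"

definition hyp_space :: "('n::finite) mpt set" where
  "hyp_space = {p. minner p p = -1 \<and> snd p > 0}"

definition spacelike :: "('n::finite) mpt \<Rightarrow> bool" where
  "spacelike v \<longleftrightarrow> minner v v > 0"

definition hyperplane_of :: "('n::finite) mpt \<Rightarrow> 'n mpt set" where
  "hyperplane_of v = {p \<in> hyp_space. minner p v = 0}"

text \<open>Points of the visual boundary are rays of future light-like vectors;
  the boundary of the hyperplane H_v consists of the rays orthogonal to v.
  (Both conditions are invariant under positive scaling, so we work with
  representatives.)\<close>
definition ideal_rep :: "('n::finite) mpt \<Rightarrow> bool" where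
  "ideal_rep w \<longleftrightarrow> w \<noteq> 0 \<and> minner w w = 0 \<and> snd w > 0"

definition hyperplane_boundary :: "('n::finite) mpt \<Rightarrow> 'n mpt set" where
  "hyperplane_boundary v = {w. ideal_rep w \<and> minner w v = 0}"

definition ultra_parallel :: "('n::finite) mpt \<Rightarrow> 'n mpt \<Rightarrow> bool" where
  "ultra_parallel u v \<longleftrightarrow>
     hyperplane_of u \<inter> hyperplane_of v = {} \<and>
     hyperplane_boundary u \<inter> hyperplane_boundary v = {}"

definition mrefl :: "('n::finite) mpt \<Rightarrow> 'n mpt \<Rightarrow> 'n mpt" where
  "mrefl v x = x - (2 * minner x v / minner v v) *\<^sub>R v"

definition geod :: "('n::finite) mpt \<Rightarrow> 'n mpt \<Rightarrow> real \<Rightarrow> 'n mpt" where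
  "geod p w t = cosh t *\<^sub>R p + sinh t *\<^sub>R w"

definition geod_vel :: "('n::finite) mpt \<Rightarrow> 'n mpt \<Rightarrow> real \<Rightarrow> 'n mpt" where
  "geod_vel p w t = sinh t *\<^sub>R p + cosh t *\<^sub>R w"

definition geod_data :: "('n::finite) mpt \<Rightarrow> 'n mpt \<Rightarrow> bool" where
  "geod_data p w \<longleftrightarrow> p \<in> hyp_space \<and> minner w w = 1 \<and> minner p w = 0"

text \<open>The geodesic line (p,w) meets H_v orthogonally: at an intersection point q
  the velocity is Minkowski-orthogonal to the tangent space of H_v at q.\<close>
definition meets_orthogonally :: "('n::finite) mpt \<Rightarrow> 'n mpt \<Rightarrow> 'n mpt \<Rightarrow> bool" where
  "meets_orthogonally p w v \<longleftrightarrow>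
     (\<exists>t. geod p w t \<in> hyperplane_of v \<and>
          (\<forall>x. minner x (geod p w t) = 0 \<and> minner x v = 0 \<longrightarrow>
               minner x (geod_vel p w t) = 0))"

text \<open>Discreteness of a group of linear maps of Minkowski space (the
  topology on O(n,1), which induces that of Iso(H^n)).\<close>
definition discrete_maps :: "(('n::finite) mpt \<Rightarrow> 'n mpt) set \<Rightarrow> bool" where
  "discrete_maps D \<longleftrightarrow>
     (\<forall>g\<in>D. \<exists>e>0. \<forall>h\<in>D. h \<noteq> g \<longrightarrow> e \<le> onorm (\<lambda>x. h x - g x))"

definition gen_group :: "(('n::finite) mpt \<Rightarrow> 'n mpt) set \<Rightarrow> ('n mpt \<Rightarrow> 'n mpt) monoid" where
  "gen_group S = (BijGroup UNIV) \<lparr>carrier := generate (BijGroup UNIV) S\<rparr>"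

text \<open>The infinite dihedral group, realised as the isometry group of Z:
  maps x \<mapsto> x + b and x \<mapsto> b - x.\<close>
definition Dinf :: "(int \<Rightarrow> int) monoid" where
  "Dinf = \<lparr>carrier = {f. \<exists>b. f = (\<lambda>x. x + b) \<or> f = (\<lambda>x. b - x)},
           mult = (\<circ>), one = id\<rparr>"

end

theory Submission
  imports Defs
begin

(* Each H_i meets the common perpendicular geod p w orthogonally at some time t_i, so its
   normal is parallel to the velocity there and r_i is the reflection t |-> 2 t_i - t of
   that geodesic, extended by the identity on the orthogonal complement of span {p, w}.
   Hence D lies in the group of "axial motions" t |-> e t + b (e = +-1), a copy of Isom(R).
   The hyperplanes are disjoint, so the t_i are distinct and D contains a nontrivial
   translation; discreteness makes its translations a lattice c Z with c > 0, and its
   reflections are then the coset 2 t_0 + c Z, so D is isomorphic to Isom(Z) = D_inf. *)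

lemma minner_commute: "minner x y = minner y x"
  by (simp add: minner_def inner_commute mult.commute)

lemma minner_add_left [simp]: "minner (x + y) z = minner x z + minner y z"
  by (simp add: minner_def inner_add_left algebra_simps)

lemma minner_add_right [simp]: "minner z (x + y) = minner z x + minner z y"
  by (simp add: minner_def inner_add_right algebra_simps)

lemma minner_diff_left [simp]: "minner (x - y) z = minner x z - minner y z"
  by (simp add: minner_def inner_diff_left algebra_simps)

lemma minner_diff_right [simp]: "minner z (x - y) = minner z x - minner z y"
  by (simp add: minner_def inner_diff_right algebra_simps)

lemma minner_scaleR_left [simp]: "minner (a *\<^sub>R x) z = a * minner x z"
  by (simp add: minner_def algebra_simps)

lemma minner_scaleR_right [simp]: "minner z (a *\<^sub>R x) = a * minner z x"
  by (simp add: minner_def algebra_simps)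

lemma norm_fst_snd_le: "norm (fst z) \<le> norm z" "norm (snd z) \<le> norm z"
  using norm_fst_le[of "fst z" "snd z"] norm_snd_le[of "snd z" "fst z"] by simp_all

lemma abs_minner_le: "\<bar>minner x y\<bar> \<le> 2 * norm x * norm y"
proof -
  have "\<bar>fst x \<bullet> fst y\<bar> \<le> norm (fst x) * norm (fst y)"
    by (rule Cauchy_Schwarz_ineq2)
  also have "\<dots> \<le> norm x * norm y"
    by (intro mult_mono norm_fst_snd_le) auto
  finally have "\<bar>fst x \<bullet> fst y\<bar> \<le> norm x * norm y" .
  moreover have "\<bar>snd x * snd y\<bar> \<le> norm x * norm y"
    using mult_mono[OF norm_fst_snd_le(2)[of x] norm_fst_snd_le(2)[of y]] by (simp add: abs_mult)
  ultimately show ?thesis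
    by (simp add: minner_def)
qed

lemma null_orthogonal_timelike_eq_0:
  assumes "minner q q = -1" "minner y q = 0" "minner y y = 0"
  shows "y = 0"
proof -
  have "fst q \<bullet> fst q = snd q * snd q - 1" "fst y \<bullet> fst q = snd y * snd q"
    "fst y \<bullet> fst y = snd y * snd y"
    using assms by (auto simp: minner_def)
  moreover have "(fst y \<bullet> fst q)\<^sup>2 \<le> (fst y \<bullet> fst y) * (fst q \<bullet> fst q)"
    by (rule Cauchy_Schwarz_ineq)
  ultimately have "(snd y * snd q)\<^sup>2 \<le> (snd y * snd y) * (snd q * snd q - 1)"
    by simp
  then have "snd y * snd y \<le> 0"
    by (simp add: power2_eq_square algebra_simps)
  then have "snd y = 0"
    using zero_le_square[of "snd y"] by (metis antisym mult_eq_0_iff)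
  moreover from this have "fst y = 0"
    using \<open>fst y \<bullet> fst y = snd y * snd y\<close> by simp
  ultimately show ?thesis
    by (simp add: prod_eq_iff)
qed

text \<open>The part v' of v orthogonal to u is null, since otherwise
  u - (\<langle>u,v\<rangle>/\<langle>v',v'\<rangle>) v' is orthogonal to q and v but not to u; as v' is also
  orthogonal to the timelike q, it vanishes.\<close>
lemma parallel_if_orthogonals_subset:
  assumes q: "minner q q = -1" and u: "minner u u = 1" "minner q u = 0"
    and v: "minner q v = 0" "v \<noteq> 0"
    and orth: "\<And>x. minner x q = 0 \<Longrightarrow> minner x v = 0 \<Longrightarrow> minner x u = 0"
  obtains c where "c \<noteq> 0" "v = c *\<^sub>R u"
proof -
  define v' where "v' = v - minner v u *\<^sub>R u"
  have uq: "minner u q = 0"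
    using u(2) minner_commute by metis
  have v'q: "minner v' q = 0"
    using uq v(1) by (simp add: v'_def minner_commute)
  have v'u: "minner v' u = 0"
    using u(1) by (simp add: v'_def)
  have v'v: "minner v' v = minner v' v'"
    using v'u by (simp add: v'_def)
  have "minner v' v' = 0"
  proof (rule ccontr)
    assume nz: "minner v' v' \<noteq> 0"
    define x where "x = u - (minner u v / minner v' v') *\<^sub>R v'"
    have "minner x q = 0" "minner x v = 0"
      using uq v'q nz by (simp_all add: x_def v'v)
    moreover have "minner x u = 1"
      using u(1) v'u by (simp add: x_def)
    ultimately show False
      using orth by fastforce
  qed
  then have "v = minner v u *\<^sub>R u"
    using null_orthogonal_timelike_eq_0[OF q v'q] by (simp add: v'_def)
  with v(2) show thesis
    using that by (metis scale_zero_left)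
qed

lemma mrefl_scaleR: "c \<noteq> 0 \<Longrightarrow> mrefl (c *\<^sub>R u) = mrefl u"
  by (rule ext) (simp add: mrefl_def)

lemma discrete_real_subgroup_least_positive:
  fixes L :: "real set"
  assumes diff: "\<And>x y. x \<in> L \<Longrightarrow> y \<in> L \<Longrightarrow> x - y \<in> L"
    and pos: "a \<in> L" "a > 0"
    and gap: "\<delta> > 0" "\<And>x. x \<in> L \<Longrightarrow> x \<noteq> 0 \<Longrightarrow> \<delta> \<le> \<bar>x\<bar>"
  obtains c where "c \<in> L" "c > 0" "\<And>x. x \<in> L \<Longrightarrow> x > 0 \<Longrightarrow> c \<le> x"
proof -
  define P where "P = {x \<in> L. x > 0}"
  have P: "P \<noteq> {}" "bdd_below P"
    using pos by (auto simp: P_def intro: bdd_belowI[of _ 0])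
  have lower: "Inf P \<le> x" if "x \<in> L" "x > 0" for x
    using that P(2) by (auto simp: P_def intro: cInf_lower)
  have "Inf P \<in> P"
  proof (rule ccontr)
    assume "Inf P \<notin> P"
    obtain x where x: "x \<in> P" "x < Inf P + \<delta>"
      using cInf_lessD[OF P(1), of "Inf P + \<delta>"] gap(1) by auto
    then have "Inf P < x"
      using \<open>Inf P \<notin> P\<close> P(2) cInf_lower[of x P] by (metis order_le_less)
    then obtain y where y: "y \<in> P" "y < x"
      using cInf_lessD[OF P(1)] by blast
    then have "x - y \<in> L" "0 < x - y" "x - y < \<delta>"
      using x diff cInf_lower[OF _ P(2), of y] by (auto simp: P_def)
    then show False
      using gap(2) by fastforce
  qed
  then show thesis
    using that lower by (auto simp: P_def)
qed

lemma discrete_real_subgroup_eq_multiples: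
  fixes L :: "real set"
  assumes zero: "0 \<in> L" and diff: "\<And>x y. x \<in> L \<Longrightarrow> y \<in> L \<Longrightarrow> x - y \<in> L"
    and a: "a \<in> L" "a \<noteq> 0"
    and gap: "\<delta> > 0" "\<And>x. x \<in> L \<Longrightarrow> x \<noteq> 0 \<Longrightarrow> \<delta> \<le> \<bar>x\<bar>"
  obtains c where "c > 0" "L = range (\<lambda>n::int. of_int n * c)"
proof -
  have neg: "- x \<in> L" if "x \<in> L" for x
    using diff[OF zero that] by simp
  have "\<bar>a\<bar> \<in> L" "\<bar>a\<bar> > 0"
    using a neg by (auto simp: abs_if)
  then obtain c where c: "c \<in> L" "c > 0" and least: "\<And>x. x \<in> L \<Longrightarrow> x > 0 \<Longrightarrow> c \<le> x"
    using discrete_real_subgroup_least_positive[OF diff _ _ gap] by blast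
  have nat_mult: "real m * c \<in> L" for m :: nat
  proof (induction m)
    case (Suc m)
    then show ?case
      using diff[OF Suc neg[OF c(1)]] by (simp add: distrib_right add.commute)
  qed (simp add: zero)
  have int_mult: "of_int n * c \<in> L" for n :: int
    using nat_mult[of "nat n"] neg[OF nat_mult[of "nat (- n)"]] by (cases "n \<ge> 0") auto
  have "x \<in> range (\<lambda>n::int. of_int n * c)" if "x \<in> L" for x
  proof -
    define r where "r = x - of_int \<lfloor>x / c\<rfloor> * c"
    have "r \<in> L"
      unfolding r_def using diff[OF that int_mult] .
    moreover have "0 \<le> r" "r < c"
      using c(2) floor_divide_lower[of c x] floor_divide_upper[of c x] by (auto simp: r_def algebra_simps)
    ultimately have "r = 0"
      using least by fastforce
    then show ?thesis
      by (auto simp: r_def)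
  qed
  with int_mult c(2) show thesis
    using that by blast
qed

lemma Dinf_cases [consumes 1, case_names translation reflection]:
  assumes "f \<in> carrier Dinf"
  obtains b where "f = (\<lambda>x. x + b)" | b where "f = (\<lambda>x. b - x)"
  using assms by (auto simp: Dinf_def)

lemma translation_in_Dinf [simp]: "(\<lambda>x. x + b) \<in> carrier Dinf"
  by (auto simp: Dinf_def)

lemma reflection_in_Dinf [simp]: "(\<lambda>x. b - x) \<in> carrier Dinf"
  by (auto simp: Dinf_def)

lemma Dinf_mult [simp]: "f \<otimes>\<^bsub>Dinf\<^esub> g = f \<circ> g"
  by (simp add: Dinf_def)

lemma Dinf_one [simp]: "\<one>\<^bsub>Dinf\<^esub> = id"
  by (simp add: Dinf_def)

lemma translation_comp_translation: "(\<lambda>x::int. x + b) \<circ> (\<lambda>x. x + b') = (\<lambda>x. x + (b + b'))"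
  by (auto simp: fun_eq_iff)

lemma translation_comp_reflection: "(\<lambda>x::int. x + b) \<circ> (\<lambda>x. b' - x) = (\<lambda>x. (b + b') - x)"
  by (auto simp: fun_eq_iff)

lemma reflection_comp_translation: "(\<lambda>x::int. b - x) \<circ> (\<lambda>x. x + b') = (\<lambda>x. (b - b') - x)"
  by (auto simp: fun_eq_iff)

lemma reflection_comp_reflection: "(\<lambda>x::int. b - x) \<circ> (\<lambda>x. b' - x) = (\<lambda>x. x + (b - b'))"
  by (auto simp: fun_eq_iff)

lemmas Dinf_comp_simps = translation_comp_translation translation_comp_reflection
  reflection_comp_translation reflection_comp_reflection

lemma group_Dinf: "group Dinf"
proof (rule groupI)
  show "\<one>\<^bsub>Dinf\<^esub> \<in> carrier Dinf"
    using translation_in_Dinf[of 0] by (simp add: id_def)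
next
  fix f g
  assume "f \<in> carrier Dinf" "g \<in> carrier Dinf"
  then show "f \<otimes>\<^bsub>Dinf\<^esub> g \<in> carrier Dinf"
    by (elim Dinf_cases) (simp_all add: Dinf_comp_simps)
next
  fix f
  assume "f \<in> carrier Dinf"
  then show "\<exists>g\<in>carrier Dinf. g \<otimes>\<^bsub>Dinf\<^esub> f = \<one>\<^bsub>Dinf\<^esub>"
  proof (cases rule: Dinf_cases)
    case (translation b)
    then show ?thesis
      using translation_in_Dinf[of "- b"] by (intro bexI[of _ "\<lambda>x. x + - b"]) (auto simp: fun_eq_iff)
  next
    case (reflection b)
    then show ?thesis
      by (intro bexI[of _ "\<lambda>x. b - x"]) (auto simp: fun_eq_iff)
  qed
qed (simp_all add: comp_assoc)

lemma bij_in_BijGroup_UNIV: "bij f \<Longrightarrow> f \<in> carrier (BijGroup UNIV)"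
  by (simp add: BijGroup_def Bij_def)

lemma BijGroup_UNIV_mult:
  "f \<in> carrier (BijGroup UNIV) \<Longrightarrow> g \<in> carrier (BijGroup UNIV) \<Longrightarrow> f \<otimes>\<^bsub>BijGroup UNIV\<^esub> g = f \<circ> g"
  by (simp add: BijGroup_def compose_def fun_eq_iff)

lemma BijGroup_UNIV_one: "\<one>\<^bsub>BijGroup UNIV\<^esub> = id"
  by (simp add: BijGroup_def fun_eq_iff)

text \<open>For Minkowski-orthonormal p, w (p timelike) this is the linear isometry that fixes
  the orthogonal complement of span {p, w} and moves the geodesic geod p w by
  t \<mapsto> e t + b, for e = \<plusminus>1.\<close>
definition axial_motion :: "('n::finite) mpt \<Rightarrow> 'n mpt \<Rightarrow> real \<Rightarrow> real \<Rightarrow> 'n mpt \<Rightarrow> 'n mpt" where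
  "axial_motion p w e b x = x + ((- minner x p) * (cosh b - 1) + e * minner x w * sinh b) *\<^sub>R p
      + ((- minner x p) * sinh b + minner x w * (e * cosh b - 1)) *\<^sub>R w"

locale geodesic_frame =
  fixes p w :: "('n::finite) mpt"
  assumes minner_p_p: "minner p p = -1" and minner_w_w: "minner w w = 1"
    and minner_p_w: "minner p w = 0"
begin

lemma minner_w_p: "minner w p = 0"
  using minner_p_w minner_commute by metis

lemma minner_axial_motion_p:
  "minner (axial_motion p w e b x) p = minner x p * cosh b - e * minner x w * sinh b"
  by (simp add: axial_motion_def minner_p_p minner_w_p algebra_simps)

lemma minner_axial_motion_w:
  "minner (axial_motion p w e b x) w = e * minner x w * cosh b - minner x p * sinh b"
  by (simp add: axial_motion_def minner_p_w minner_w_w algebra_simps)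

lemma axial_motion_comp:
  assumes "e \<in> {1, -1}" "e' \<in> {1, -1}"
  shows "axial_motion p w e b \<circ> axial_motion p w e' b' = axial_motion p w (e * e') (b + e * b')"
proof
  fix x
  show "(axial_motion p w e b \<circ> axial_motion p w e' b') x = axial_motion p w (e * e') (b + e * b') x"
    using assms
    by (simp only: comp_def axial_motion_def[of _ _ e b] minner_axial_motion_p minner_axial_motion_w)
      (auto simp: axial_motion_def cosh_add sinh_add algebra_simps)
qed

lemma axial_motion_1_0: "axial_motion p w 1 0 = id"
  by (rule ext) (simp add: axial_motion_def)

lemma bij_axial_motion:
  assumes "e \<in> {1, -1}"
  shows "bij (axial_motion p w e b)"
proof (rule o_bij)
  have "e * e = 1"
    using assms by auto
  then show "axial_motion p w e b \<circ> axial_motion p w e (- e * b) = id"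
    "axial_motion p w e (- e * b) \<circ> axial_motion p w e b = id"
    using axial_motion_comp[OF assms assms] by (simp_all add: axial_motion_1_0[symmetric] algebra_simps)
qed

lemma axial_motion_inject:
  assumes "e \<in> {1, -1}" "e' \<in> {1, -1}"
  shows "axial_motion p w e b = axial_motion p w e' b' \<longleftrightarrow> e = e' \<and> b = b'"
proof
  assume eq: "axial_motion p w e b = axial_motion p w e' b'"
  then have "minner (axial_motion p w e b p) w = minner (axial_motion p w e' b' p) w"
    by simp
  then have "b = b'"
    by (simp add: minner_axial_motion_w minner_p_p minner_p_w)
  moreover have "minner (axial_motion p w e b w) w = minner (axial_motion p w e' b' w) w"
    using eq by simp
  ultimately show "e = e' \<and> b = b'"
    using cosh_real_pos[of b] by (simp add: minner_axial_motion_w minner_w_p minner_w_w)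
qed simp

lemma minner_geod_geod: "minner (geod p w s) (geod p w s) = -1"
  using cosh_square_eq[of s]
  by (simp add: geod_def minner_p_p minner_w_w minner_p_w minner_w_p algebra_simps power2_eq_square)

lemma minner_geod_vel_geod_vel: "minner (geod_vel p w s) (geod_vel p w s) = 1"
  using cosh_square_eq[of s]
  by (simp add: geod_vel_def minner_p_p minner_w_w minner_p_w minner_w_p algebra_simps power2_eq_square)

lemma minner_geod_geod_vel: "minner (geod p w s) (geod_vel p w s) = 0"
  by (simp add: geod_def geod_vel_def minner_p_p minner_w_w minner_p_w minner_w_p algebra_simps)

lemma mrefl_geod_vel: "mrefl (geod_vel p w s) = axial_motion p w (-1) (2 * s)"
proof
  fix x
  define k where "k = 2 * (sinh s * minner x p + cosh s * minner x w)"
  have p_coeff: "(- minner x p) * (cosh (2 * s) - 1) + (-1) * minner x w * sinh (2 * s) = - k * sinh s"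
    unfolding cosh_double sinh_double cosh_square_eq by (simp add: k_def algebra_simps power2_eq_square)
  have w_coeff: "(- minner x p) * sinh (2 * s) + minner x w * ((-1) * cosh (2 * s) - 1) = - k * cosh s"
    unfolding cosh_double_cosh sinh_double by (simp add: k_def algebra_simps power2_eq_square)
  have "mrefl (geod_vel p w s) x = x - k *\<^sub>R (sinh s *\<^sub>R p + cosh s *\<^sub>R w)"
    by (simp add: mrefl_def minner_geod_vel_geod_vel k_def) (simp add: geod_vel_def)
  also have "\<dots> = axial_motion p w (-1) (2 * s) x"
    unfolding axial_motion_def p_coeff w_coeff by (simp add: algebra_simps)
  finally show "mrefl (geod_vel p w s) x = axial_motion p w (-1) (2 * s) x" .
qed

lemma mrefl_eq_axial_motion_if_meets_orthogonally:
  assumes "meets_orthogonally p w v" "v \<noteq> 0"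
  obtains s where "geod p w s \<in> hyperplane_of v" "mrefl v = axial_motion p w (-1) (2 * s)"
proof -
  obtain s where s: "geod p w s \<in> hyperplane_of v"
    and orth: "\<And>x. minner x (geod p w s) = 0 \<Longrightarrow> minner x v = 0 \<Longrightarrow> minner x (geod_vel p w s) = 0"
    using assms(1) by (auto simp: meets_orthogonally_def)
  have "minner (geod p w s) v = 0"
    using s by (simp add: hyperplane_of_def)
  then obtain c where "c \<noteq> 0" "v = c *\<^sub>R geod_vel p w s"
    using parallel_if_orthogonals_subset[OF minner_geod_geod minner_geod_vel_geod_vel
        minner_geod_geod_vel _ assms(2) orth] by blast
  then have "mrefl v = axial_motion p w (-1) (2 * s)"
    by (simp add: mrefl_scaleR mrefl_geod_vel)
  with s show thesis
    using that by blast
qed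

lemma axial_motion_in_BijGroup: "e \<in> {1, -1} \<Longrightarrow> axial_motion p w e b \<in> carrier (BijGroup UNIV)"
  by (simp add: bij_axial_motion bij_in_BijGroup_UNIV)

lemma axial_motion_mult:
  "e \<in> {1, -1} \<Longrightarrow> e' \<in> {1, -1} \<Longrightarrow>
    axial_motion p w e b \<otimes>\<^bsub>BijGroup UNIV\<^esub> axial_motion p w e' b' = axial_motion p w (e * e') (b + e * b')"
  by (simp add: BijGroup_UNIV_mult axial_motion_in_BijGroup axial_motion_comp)

lemma inv_axial_motion:
  assumes "e \<in> {1, -1}"
  shows "inv\<^bsub>BijGroup UNIV\<^esub> (axial_motion p w e b) = axial_motion p w e (- e * b)"
proof (rule group.inv_equality[OF group_BijGroup])
  have "e * e = 1"
    using assms by auto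
  then show "axial_motion p w e (- e * b) \<otimes>\<^bsub>BijGroup UNIV\<^esub> axial_motion p w e b = \<one>\<^bsub>BijGroup UNIV\<^esub>"
    using assms by (simp add: axial_motion_mult BijGroup_UNIV_one axial_motion_1_0[symmetric])
qed (use assms axial_motion_in_BijGroup in auto)

lemma onorm_axial_translation_le:
  "onorm (\<lambda>x. axial_motion p w 1 b x - x) \<le> (\<bar>cosh b - 1\<bar> + \<bar>sinh b\<bar>) * (2 * (norm p + norm w)\<^sup>2)"
proof (rule onorm_le)
  fix x
  define g where "g = \<bar>cosh b - 1\<bar> + \<bar>sinh b\<bar>"
  define m where "m = \<bar>minner x p\<bar> + \<bar>minner x w\<bar>"
  define A where "A = (- minner x p) * (cosh b - 1) + minner x w * sinh b"
  define B where "B = (- minner x p) * sinh b + minner x w * (cosh b - 1)"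
  have g: "\<bar>cosh b - 1\<bar> \<le> g" "\<bar>sinh b\<bar> \<le> g"
    by (simp_all add: g_def)
  have "\<bar>A\<bar> \<le> \<bar>minner x p\<bar> * \<bar>cosh b - 1\<bar> + \<bar>minner x w\<bar> * \<bar>sinh b\<bar>"
    unfolding A_def by (rule order.trans[OF abs_triangle_ineq]) (simp add: abs_mult)
  also have "\<dots> \<le> m * g"
    unfolding m_def distrib_right by (intro add_mono mult_left_mono g) auto
  finally have A: "\<bar>A\<bar> \<le> m * g" .
  have "\<bar>B\<bar> \<le> \<bar>minner x p\<bar> * \<bar>sinh b\<bar> + \<bar>minner x w\<bar> * \<bar>cosh b - 1\<bar>"
    unfolding B_def by (rule order.trans[OF abs_triangle_ineq]) (simp add: abs_mult)
  also have "\<dots> \<le> m * g"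
    unfolding m_def distrib_right by (intro add_mono mult_left_mono g) auto
  finally have B: "\<bar>B\<bar> \<le> m * g" .
  have "norm (axial_motion p w 1 b x - x) \<le> \<bar>A\<bar> * norm p + \<bar>B\<bar> * norm w"
    using norm_triangle_ineq[of "A *\<^sub>R p" "B *\<^sub>R w"] by (simp add: axial_motion_def A_def B_def)
  also have "\<dots> \<le> (m * (norm p + norm w)) * g"
    using mult_right_mono[OF A, of "norm p"] mult_right_mono[OF B, of "norm w"]
    by (simp add: algebra_simps)
  also have "\<dots> \<le> (2 * norm x * (norm p + norm w) * (norm p + norm w)) * g"
  proof (intro mult_right_mono)
    show "m \<le> 2 * norm x * (norm p + norm w)"
      using abs_minner_le[of x p] abs_minner_le[of x w] by (simp add: m_def distrib_left)
  qed (simp_all add: g_def)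
  finally show "norm (axial_motion p w 1 b x - x) \<le> (g * (2 * (norm p + norm w)\<^sup>2)) * norm x"
    by (simp add: power2_eq_square algebra_simps)
qed

lemma axial_translation_near_id:
  assumes "\<epsilon> > 0"
  obtains \<delta> where "\<delta> > 0" "\<And>b. \<bar>b\<bar> < \<delta> \<Longrightarrow> onorm (\<lambda>x. axial_motion p w 1 b x - x) < \<epsilon>"
proof -
  define f where "f b = (\<bar>cosh b - 1\<bar> + \<bar>sinh b\<bar>) * (2 * (norm p + norm w)\<^sup>2)" for b :: real
  have "isCont f 0"
    unfolding f_def by (intro continuous_intros)
  then obtain \<delta> where \<delta>0: "\<delta> > 0" and \<delta>: "\<And>b. \<bar>b\<bar> < \<delta> \<Longrightarrow> \<bar>f b - f 0\<bar> < \<epsilon>"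
    using assms unfolding continuous_at_eps_delta dist_real_def by fastforce
  show thesis
  proof (rule that[OF \<delta>0])
    fix b :: real
    assume "\<bar>b\<bar> < \<delta>"
    then have "f b < \<epsilon>"
      using \<delta> by (simp add: f_def)
    then show "onorm (\<lambda>x. axial_motion p w 1 b x - x) < \<epsilon>"
      using onorm_axial_translation_le[of b] by (simp add: f_def)
  qed
qed

lemma axial_motion_if_in_generate:
  assumes "h \<in> generate (BijGroup UNIV) (axial_motion p w (-1) ` A)"
  shows "\<exists>e b. e \<in> {1, -1} \<and> h = axial_motion p w e b"
  using assms
proof (induction rule: generate.induct)
  case one
  show ?case
    by (intro exI[of _ 1] exI[of _ 0]) (simp add: BijGroup_UNIV_one axial_motion_1_0)
next
  case (incl h)
  then show ?case
    by blast
next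
  case (inv h)
  then obtain b where "h = axial_motion p w (-1) b"
    by blast
  then show ?case
    by (intro exI[of _ "-1"] exI[of _ b]) (simp add: inv_axial_motion)
next
  case (eng h1 h2)
  then obtain e b e' b' where "e \<in> {1, -1}" "h1 = axial_motion p w e b"
    "e' \<in> {1, -1}" "h2 = axial_motion p w e' b'"
    by blast
  then show ?case
    by (intro exI[of _ "e * e'"] exI[of _ "b + e * b'"]) (auto simp: axial_motion_mult)
qed

lemma axial_reflection_in_subgroup_iff:
  assumes "subgroup H (BijGroup UNIV)" "axial_motion p w (-1) a \<in> H"
  shows "axial_motion p w (-1) b \<in> H \<longleftrightarrow> axial_motion p w 1 (b - a) \<in> H"
proof
  assume "axial_motion p w (-1) b \<in> H"
  then have "axial_motion p w (-1) b \<otimes>\<^bsub>BijGroup UNIV\<^esub> axial_motion p w (-1) a \<in> H"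
    using assms by (simp add: subgroup.m_closed)
  then show "axial_motion p w 1 (b - a) \<in> H"
    by (simp add: axial_motion_mult)
next
  assume "axial_motion p w 1 (b - a) \<in> H"
  then have "axial_motion p w 1 (b - a) \<otimes>\<^bsub>BijGroup UNIV\<^esub> axial_motion p w (-1) a \<in> H"
    using assms by (simp add: subgroup.m_closed)
  then show "axial_motion p w (-1) b \<in> H"
    by (simp add: axial_motion_mult)
qed

lemma axial_translations_discrete_cyclic:
  assumes H: "subgroup H (BijGroup UNIV)" "discrete_maps H"
    and refl: "axial_motion p w (-1) a \<in> H" "axial_motion p w (-1) a' \<in> H" "a \<noteq> a'"
  obtains c where "c > 0" "\<And>b. axial_motion p w 1 b \<in> H \<longleftrightarrow> (\<exists>n::int. b = of_int n * c)"
proof -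
  define L where "L = {b. axial_motion p w 1 b \<in> H}"
  have id_in_H: "id \<in> H"
    using subgroup.one_closed[OF H(1)] by (simp add: BijGroup_UNIV_one)
  then have "0 \<in> L"
    by (simp add: L_def axial_motion_1_0)
  moreover have "x - y \<in> L" if "x \<in> L" "y \<in> L" for x y
  proof -
    have "axial_motion p w 1 x \<otimes>\<^bsub>BijGroup UNIV\<^esub> inv\<^bsub>BijGroup UNIV\<^esub> axial_motion p w 1 y \<in> H"
      using that H(1) by (simp add: L_def subgroup.m_closed subgroup.m_inv_closed)
    then show ?thesis
      by (simp add: L_def inv_axial_motion axial_motion_mult)
  qed
  moreover have "a' - a \<in> L" "a' - a \<noteq> 0"
    using refl axial_reflection_in_subgroup_iff[OF H(1)] by (auto simp: L_def)
  moreover obtain \<epsilon> where "\<epsilon> > 0" and \<epsilon>: "\<And>h. h \<in> H \<Longrightarrow> h \<noteq> id \<Longrightarrow> \<epsilon> \<le> onorm (\<lambda>x. h x - x)"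
    using H(2) id_in_H unfolding discrete_maps_def by fastforce
  then obtain \<delta> where "\<delta> > 0" and \<delta>: "\<And>b. \<bar>b\<bar> < \<delta> \<Longrightarrow> onorm (\<lambda>x. axial_motion p w 1 b x - x) < \<epsilon>"
    using axial_translation_near_id by blast
  moreover have "\<delta> \<le> \<bar>b\<bar>" if "b \<in> L" "b \<noteq> 0" for b
  proof (rule ccontr)
    assume "\<not> \<delta> \<le> \<bar>b\<bar>"
    then have "onorm (\<lambda>x. axial_motion p w 1 b x - x) < \<epsilon>"
      using \<delta> by simp
    moreover have "axial_motion p w 1 b \<noteq> id"
      using that axial_motion_inject[of 1 1 b 0] by (simp add: axial_motion_1_0)
    then have "\<epsilon> \<le> onorm (\<lambda>x. axial_motion p w 1 b x - x)"
      using \<epsilon> that(1) by (simp add: L_def)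
    ultimately show False
      by simp
  qed
  ultimately obtain c where "c > 0" "L = range (\<lambda>n::int. of_int n * c)"
    using discrete_real_subgroup_eq_multiples by blast
  then show thesis
    using that by (auto simp: L_def set_eq_iff)
qed

text \<open>For f \<in> carrier Dinf, f 1 - f 0 = \<plusminus>1 is the sign of f and f 0 its translation part.\<close>
definition dihedral_embedding :: "real \<Rightarrow> real \<Rightarrow> (int \<Rightarrow> int) \<Rightarrow> 'n mpt \<Rightarrow> 'n mpt" where
  "dihedral_embedding c a f =
     axial_motion p w (of_int (f 1 - f 0)) (of_int (f 0) * c + (1 - of_int (f 1 - f 0)) / 2 * a)"

lemma dihedral_embedding_translation [simp]:
  "dihedral_embedding c a (\<lambda>x. x + b) = axial_motion p w 1 (of_int b * c)"
  by (simp add: dihedral_embedding_def)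

lemma dihedral_embedding_reflection [simp]:
  "dihedral_embedding c a (\<lambda>x. b - x) = axial_motion p w (-1) (a + of_int b * c)"
  by (simp add: dihedral_embedding_def add.commute)

lemma dihedral_embedding_mult:
  assumes "f \<in> carrier Dinf" "g \<in> carrier Dinf"
  shows "dihedral_embedding c a (f \<circ> g) =
    dihedral_embedding c a f \<otimes>\<^bsub>BijGroup UNIV\<^esub> dihedral_embedding c a g"
  using assms
  by (elim Dinf_cases; simp only: Dinf_comp_simps dihedral_embedding_translation
      dihedral_embedding_reflection; simp add: axial_motion_mult algebra_simps)

lemma inj_on_dihedral_embedding:
  assumes "c \<noteq> 0"
  shows "inj_on (dihedral_embedding c a) (carrier Dinf)"
proof (rule inj_onI)
  fix f g
  assume "f \<in> carrier Dinf" "g \<in> carrier Dinf" "dihedral_embedding c a f = dihedral_embedding c a g"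
  with assms show "f = g"
    by (elim Dinf_cases) (simp_all add: axial_motion_inject)
qed

lemma dihedral_embedding_image:
  assumes motions: "\<And>h. h \<in> H \<Longrightarrow> \<exists>e b. e \<in> {1, -1} \<and> h = axial_motion p w e b"
    and translation_iff: "\<And>b. axial_motion p w 1 b \<in> H \<longleftrightarrow> (\<exists>n::int. b = of_int n * c)"
    and reflection_iff: "\<And>b. axial_motion p w (-1) b \<in> H \<longleftrightarrow> (\<exists>n::int. b = a + of_int n * c)"
  shows "dihedral_embedding c a ` carrier Dinf = H"
proof
  show "dihedral_embedding c a ` carrier Dinf \<subseteq> H"
    by (auto elim!: Dinf_cases simp: translation_iff reflection_iff)
next
  show "H \<subseteq> dihedral_embedding c a ` carrier Dinf"
  proof
    fix h
    assume "h \<in> H"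
    then obtain e b where "e \<in> {1, -1}" "h = axial_motion p w e b" "h \<in> H"
      using motions by blast
    then consider n :: int where "h = dihedral_embedding c a (\<lambda>x. x + n)"
      | n :: int where "h = dihedral_embedding c a (\<lambda>x. n - x)"
      using translation_iff reflection_iff by auto
    then show "h \<in> dihedral_embedding c a ` carrier Dinf"
      by cases (metis image_eqI translation_in_Dinf reflection_in_Dinf)+
  qed
qed

lemma Dinf_iso_axial_subgroup:
  assumes "subgroup H (BijGroup UNIV)" "c \<noteq> 0"
    and "\<And>h. h \<in> H \<Longrightarrow> \<exists>e b. e \<in> {1, -1} \<and> h = axial_motion p w e b"
    and "\<And>b. axial_motion p w 1 b \<in> H \<longleftrightarrow> (\<exists>n::int. b = of_int n * c)"
    and "\<And>b. axial_motion p w (-1) b \<in> H \<longleftrightarrow> (\<exists>n::int. b = a + of_int n * c)"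
  shows "Dinf \<cong> (BijGroup UNIV)\<lparr>carrier := H\<rparr>"
proof (rule is_isoI)
  have image: "dihedral_embedding c a ` carrier Dinf = H"
    using assms(3-5) by (rule dihedral_embedding_image)
  show "dihedral_embedding c a \<in> iso Dinf ((BijGroup UNIV)\<lparr>carrier := H\<rparr>)"
  proof (rule isoI)
    show "dihedral_embedding c a \<in> hom Dinf ((BijGroup UNIV)\<lparr>carrier := H\<rparr>)"
      using image by (intro homI) (auto simp: dihedral_embedding_mult)
    show "bij_betw (dihedral_embedding c a) (carrier Dinf) (carrier ((BijGroup UNIV)\<lparr>carrier := H\<rparr>))"
      using image inj_on_dihedral_embedding[OF assms(2)] by (simp add: bij_betw_def)
  qed
qed

theorem reflection_group_iso_Dinf:
  assumes "a \<in> A" "a' \<in> A" "a \<noteq> a'"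
    and discrete: "discrete_maps (carrier (gen_group (axial_motion p w (-1) ` A)))"
  shows "gen_group (axial_motion p w (-1) ` A) \<cong> Dinf"
proof -
  define H where "H = generate (BijGroup UNIV) (axial_motion p w (-1) ` A)"
  have H: "subgroup H (BijGroup UNIV)"
    unfolding H_def using axial_motion_in_BijGroup
    by (intro group.generate_is_subgroup[OF group_BijGroup]) auto
  have refl: "axial_motion p w (-1) x \<in> H" if "x \<in> A" for x
    unfolding H_def using that by (intro generate.incl) simp
  have "discrete_maps H"
    using discrete by (simp add: gen_group_def H_def)
  then obtain c where "c > 0"
    and translation_iff: "\<And>b. axial_motion p w 1 b \<in> H \<longleftrightarrow> (\<exists>n::int. b = of_int n * c)"
    using axial_translations_discrete_cyclic[OF H _ refl refl] assms(1-3) by metis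
  have "Dinf \<cong> gen_group (axial_motion p w (-1) ` A)"
    unfolding gen_group_def H_def[symmetric]
  proof (rule Dinf_iso_axial_subgroup[OF H])
    show "axial_motion p w (-1) b \<in> H \<longleftrightarrow> (\<exists>n::int. b = a + of_int n * c)" for b
      using axial_reflection_in_subgroup_iff[OF H refl[OF assms(1)]] by (simp add: translation_iff algebra_simps)
  qed (use \<open>c > 0\<close> translation_iff axial_motion_if_in_generate in \<open>auto simp: H_def\<close>)
  then show ?thesis
    by (rule group.iso_sym[OF group_Dinf])
qed

end

theorem mainTheorem8:
  fixes k :: nat and v :: "nat \<Rightarrow> ('n::finite) mpt"
  assumes "k \<ge> 3"
    and "\<forall>i<k. spacelike (v i)"
    and "\<forall>i<k. \<forall>j<k. i \<noteq> j \<longrightarrow> ultra_parallel (v i) (v j)"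
    and "\<exists>p w. geod_data p w \<and> (\<forall>i<k. meets_orthogonally p w (v i))"
    and "discrete_maps (carrier (gen_group ((\<lambda>i. mrefl (v i)) ` {..<k})))"
  shows "gen_group ((\<lambda>i. mrefl (v i)) ` {..<k}) \<cong> Dinf"
proof -
  obtain p w where "geod_data p w" and meets: "\<forall>i<k. meets_orthogonally p w (v i)"
    using assms(4) by blast
  then interpret geodesic_frame p w
    by unfold_locales (auto simp: geod_data_def hyp_space_def)
  have "v i \<noteq> 0" if "i < k" for i
    using assms(2) that by (auto simp: spacelike_def minner_def)
  then have "\<exists>s. geod p w s \<in> hyperplane_of (v i) \<and> mrefl (v i) = axial_motion p w (-1) (2 * s)"
    if "i < k" for i
    using mrefl_eq_axial_motion_if_meets_orthogonally[of "v i"] meets that by metis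
  then obtain t where t: "\<And>i. i < k \<Longrightarrow> geod p w (t i) \<in> hyperplane_of (v i)"
    and refl: "\<And>i. i < k \<Longrightarrow> mrefl (v i) = axial_motion p w (-1) (2 * t i)"
    by metis
  have "ultra_parallel (v 0) (v 1)"
    using assms(1,3) by simp
  then have "t 0 \<noteq> t 1"
    using t[of 0] t[of 1] assms(1) unfolding ultra_parallel_def by force
  moreover have "(\<lambda>i. mrefl (v i)) ` {..<k} = axial_motion p w (-1) ` (\<lambda>i. 2 * t i) ` {..<k}"
    using refl by (auto simp: image_image)
  ultimately show ?thesis
    using reflection_group_iso_Dinf[of "2 * t 0" _ "2 * t 1"] assms(1,5) by auto
qed

end
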